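(* Let $n \ge 2$ and let $x, y, z \in \mathbb{R}^n/\mathbb{R}\mathbb{1}$. Then \[ \frac{1}{n-1}\, d_{\Delta}(x,y) \;\le\; \frac{1}{n-1}\, d_{\Delta}(x,z) + d_{\Delta}(y,z). \]
   Context: $\mathbb{1}=(1,\dots,1)\in\mathbb{R}^n$. The tropical torus is $\mathbb{R}^n/\mathbb{R}\mathbb{1}=\{x+\mathbb{R}\mathbb{1} : x\in\mathbb{R}^n\}$. The asymmetric tropical distance on $\mathbb{R}^n$ is $d_{\Delta}(x,y)=\sum_{i=1}^n (y_i-x_i) + n\max_{i}(x_i-y_i)$. It satisfies $d_\Delta(x+\lambda\mathbb{1},y+\mu\mathbb{1})=d_\Delta(x,y)$ for all $\lambda,\mu\in\mathbb{R}$, and hence induces a function $d_\Delta$ on $\mathbb{R}^n/\mathbb{R}\mathbb{1}$. *)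

theory Defs
  imports "HOL-Analysis.Analysis"
begin

text \<open>It is invariant under adding multiples of the all-ones vector to either argument,
  so it descends to the tropical torus R^n / R1; points of the torus are represented
  by arbitrary representatives.\<close>

definition trop_dist :: "real^'n \<Rightarrow> real^'n \<Rightarrow> real" where
  "trop_dist x y = (\<Sum>i\<in>UNIV. y$i - x$i) + real CARD('n) * (MAX i\<in>UNIV. x$i - y$i)"

end

theory Submission
  imports Defs
begin

text \<open>Measured from a common base point z, write u = x - z and v = y - z. Then
  d(x,y) = n max(u - v) - \<Sum>(u - v), d(x,z) = n max u - \<Sum>u and d(y,z) = n max v - \<Sum>v,
  so after multiplying out the claim reduces to max(u - v) + \<Sum>v \<le> max u + (n - 1) max v.
  This holds because at an index k attaining max(u - v) we have u k \<le> max u, while the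
  remaining n - 1 summands of \<Sum>v - v k are each at most max v.\<close>

lemma Max_diff_plus_sum_le:
  fixes u v :: "'i \<Rightarrow> real"
  assumes "finite A" "A \<noteq> {}"
  shows "(MAX i\<in>A. u i - v i) + sum v A \<le> (MAX i\<in>A. u i) + (real (card A) - 1) * (MAX i\<in>A. v i)"
proof -
  obtain k where "k \<in> A" and k_max: "(MAX i\<in>A. u i - v i) = u k - v k"
    using assms by (metis (no_types, lifting) Max_in finite_imageI image_iff image_is_empty)
  have "u k \<le> (MAX i\<in>A. u i)"
    using assms \<open>k \<in> A\<close> by simp
  moreover have "sum v (A - {k}) \<le> (real (card A) - 1) * (MAX i\<in>A. v i)"
  proof -
    have "sum v (A - {k}) \<le> (\<Sum>i\<in>A - {k}. MAX i\<in>A. v i)"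
      using assms by (intro sum_mono) simp
    also have "\<dots> = (real (card A) - 1) * (MAX i\<in>A. v i)"
      using assms \<open>k \<in> A\<close> by (simp add: card_Diff_singleton Suc_le_eq card_gt_0_iff of_nat_diff)
    finally show ?thesis .
  qed
  moreover have "sum v A = v k + sum v (A - {k})"
    using assms \<open>k \<in> A\<close> by (simp add: sum.remove)
  ultimately show ?thesis
    using k_max by linarith
qed

lemma trop_dist_eq_card_Max_minus_sum:
  "trop_dist x y = real CARD('n) * (MAX i\<in>UNIV. x$i - y$i) - (\<Sum>i\<in>UNIV. x$i - y$i)"
  for x y :: "real^'n"
  unfolding trop_dist_def by (simp add: sum_subtractf)

lemma trop_dist_le_scaled_triangle:
  fixes x y z :: "real^'n"
  shows "trop_dist x y \<le> trop_dist x z + (real CARD('n) - 1) * trop_dist y z"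
proof -
  define n where "n = real CARD('n)"
  define u where "u i = x$i - z$i" for i
  define v where "v i = y$i - z$i" for i
  have key: "(MAX i\<in>UNIV. u i - v i) + sum v UNIV \<le> (MAX i\<in>UNIV. u i) + (n - 1) * (MAX i\<in>UNIV. v i)"
    unfolding n_def by (rule Max_diff_plus_sum_le) simp_all
  have dxy: "trop_dist x y = n * (MAX i\<in>UNIV. u i - v i) - (sum u UNIV - sum v UNIV)"
    by (simp add: trop_dist_eq_card_Max_minus_sum n_def u_def v_def sum_subtractf)
  have dxz: "trop_dist x z = n * (MAX i\<in>UNIV. u i) - sum u UNIV"
    by (simp add: trop_dist_eq_card_Max_minus_sum n_def u_def)
  have dyz: "trop_dist y z = n * (MAX i\<in>UNIV. v i) - sum v UNIV"
    by (simp add: trop_dist_eq_card_Max_minus_sum n_def v_def)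
  have "trop_dist x z + (n - 1) * trop_dist y z - trop_dist x y
      = n * (((MAX i\<in>UNIV. u i) + (n - 1) * (MAX i\<in>UNIV. v i)) - ((MAX i\<in>UNIV. u i - v i) + sum v UNIV))"
    unfolding dxy dxz dyz by (simp add: algebra_simps)
  also have "\<dots> \<ge> 0"
    using key by (simp add: n_def)
  finally show ?thesis
    unfolding n_def by simp
qed

theorem mainTheorem1:
  fixes x y z :: "real^'n"
  assumes "CARD('n) \<ge> 2"
  shows "trop_dist x y / (real CARD('n) - 1)
           \<le> trop_dist x z / (real CARD('n) - 1) + trop_dist y z"
proof -
  have "real CARD('n) - 1 > 0"
    using assms by simp
  have "trop_dist x y / (real CARD('n) - 1)
      \<le> (trop_dist x z + (real CARD('n) - 1) * trop_dist y z) / (real CARD('n) - 1)"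
    using trop_dist_le_scaled_triangle \<open>real CARD('n) - 1 > 0\<close>
    by (rule divide_right_mono[OF _ less_imp_le])
  also have "\<dots> = trop_dist x z / (real CARD('n) - 1) + trop_dist y z"
    using \<open>real CARD('n) - 1 > 0\<close> by (simp add: add_divide_distrib)
  finally show ?thesis .
qed

end
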